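(* Let $F=\langle f_1,\ldots,f_k\rangle$ be a normalized solution to an instance $(\mathcal{T}_{initial},\mathcal{T}_{final},k)$ of Flip Distance, and let $C$ be a component of $\mathcal{D}_F$. Let $f_i$ and $f_h$, with $i<h$, be two flips in $C$. If $\phi(f_i)=\epsilon(f_h)$, or if $\phi(f_i)$ and $\epsilon(f_h)$ share a triangle $T$ in $\mathcal{T}_j$ for some $j$ with $i\le j<h$, then there is a directed path from $f_i$ to $f_h$ in $C$.
   Context: A triangulation of a finite point set $\mathcal{P}$ in the plane is a partition of the convex hull of $\mathcal{P}$ into triangles whose vertex set is $\mathcal{P}$. For an interior edge $e$ of a triangulation $\mathcal{T}$, the quadrilateral associated with $e$ is the union of the two triangles of $\mathcal{T}$ sharing $e$. A flip $f$ with underlying edge $\epsilon(f)=e$ is admissible in $\mathcal{T}$ if $e\in\mathcal{T}$ and its associated quadrilateral is convex; performing it replaces $e$ by the other diagonal $\phi(f)$ of that quadrilateral. Two distinct edges share a triangle in $\mathcal{T}$ if they are edges of the same triangle of $\mathcal{T}$. A sequence $F=\langle f_1,\ldots,f_r\rangle$ is valid with respect to $\mathcal{T}$ if there are triangulations $\mathcal{T}_0=\mathcal{T},\mathcal{T}_1,\ldots,\mathcal{T}_r$ such that $f_i$ is admissible in $\mathcal{T}_{i-1}$ and performing it yields $\mathcal{T}_i$; then we write $\mathcal{T}\xrightarrow{F}\mathcal{T}_r$. Flips in a sequence are distinct objects even if they have the same underlying edge. For $1\le i<j\le r$, flip $f_j$ is adjacent to $f_i$ (written $f_i\to f_j$)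 if (1) either $\phi(f_i)=\epsilon(f_j)$ or $\phi(f_i)$ and $\epsilon(f_j)$ share a triangle in $\mathcal{T}_{j-1}$, and (2) there is no $p$ with $i<p<j$ and $\epsilon(f_p)=\phi(f_i)$. $\mathcal{D}_F$ is the directed acyclic graph whose nodes are the flips of $F$ and whose arcs are the pairs $f_i\to f_j$; a component of it is a weakly connected component. The flip distance between two triangulations is the minimum length of a valid sequence transforming one into the other. An instance $(\mathcal{T}_{initial},\mathcal{T}_{final},k)$ of Flip Distance consists of two triangulations of $\mathcal{P}$ and $k\in\mathbb{N}$; a solution is a valid sequence $F$ of length $k$ with $\mathcal{T}_{initial}\xrightarrow{F}\mathcal{T}_{final}$, where $k$ is the flip distance between them. For a solution $F=\langle f_1,\ldots,f_k\rangle$, $\mathcal{T}_j$ denotes the outcome of applying $\langle f_1,\ldots,f_j\rangle$ to $\mathcal{T}_{initial}$. A changed edge is an edge of $\mathcal{T}_{initial}$ not in $\mathcal{T}_{final}$; a component of $\mathcal{D}_F$ is essential if it contains a flip whose underlying edge is a changed edge. A solution $F$ is normalized if every component of $\mathcal{D}_F$ is essential and the flips of each component of $\mathcal{D}_F$ appear as a consecutive block in $F$. *)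

theory Defs
  imports "HOL-Analysis.Analysis"
begin

type_synonym pt = "real \<times> real"
type_synonym triangle = "pt set"
type_synonym edge = "pt set"
(* a flip is recorded as the pair (underlying edge epsilon(f), new diagonal phi(f)) *)
type_synonym flip = "edge \<times> edge"

definition eps :: "flip \<Rightarrow> edge" where "eps f = fst f"
definition phi :: "flip \<Rightarrow> edge" where "phi f = snd f"

definition triangulation :: "pt set \<Rightarrow> triangle set \<Rightarrow> bool" where
  "triangulation P T \<longleftrightarrow> finite P \<and> finite T \<and>
     (\<forall>t\<in>T. t \<subseteq> P \<and> card t = 3 \<and> \<not> collinear t) \<and>
     (\<forall>t1\<in>T. \<forall>t2\<in>T. convex hull t1 \<inter> convex hull t2 = convex hull (t1 \<inter> t2)) \<and>
     \<Union> ((\<lambda>t. convex hull t) ` T) = convex hull P \<and>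
     \<Union> T = P"

definition edges :: "triangle set \<Rightarrow> edge set" where
  "edges T = {e. card e = 2 \<and> (\<exists>t\<in>T. e \<subseteq> t)}"

definition share_triangle :: "triangle set \<Rightarrow> edge \<Rightarrow> edge \<Rightarrow> bool" where
  "share_triangle T e1 e2 \<longleftrightarrow> e1 \<noteq> e2 \<and> card e1 = 2 \<and> card e2 = 2 \<and>
     (\<exists>t\<in>T. e1 \<subseteq> t \<and> e2 \<subseteq> t)"

definition convex_quad :: "pt set \<Rightarrow> pt set \<Rightarrow> bool" where
  "convex_quad t1 t2 \<longleftrightarrow> convex (convex hull t1 \<union> convex hull t2) \<and>
     (\<forall>v \<in> t1 \<union> t2. v \<notin> convex hull ((t1 \<union> t2) - {v}))"

definition admissible :: "pt set \<Rightarrow> triangle set \<Rightarrow> flip \<Rightarrow> bool" where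
  "admissible P T f \<longleftrightarrow> triangulation P T \<and> eps f \<in> edges T \<and>
     (\<exists>c d. c \<noteq> d \<and> c \<notin> eps f \<and> d \<notin> eps f \<and> phi f = {c, d} \<and>
        insert c (eps f) \<in> T \<and> insert d (eps f) \<in> T \<and>
        convex_quad (insert c (eps f)) (insert d (eps f)))"

definition perform :: "triangle set \<Rightarrow> flip \<Rightarrow> triangle set" where
  "perform T f = (T - {t. eps f \<subseteq> t}) \<union> {insert x (phi f) | x. x \<in> eps f}"

text \<open>Valid sequence (0-based): Ts ! j is the triangulation T_j; flip F ! i (the paper's
  f_(i+1)) is admissible in Ts ! i and yields Ts ! (i+1).\<close>
definition valid_seq :: "pt set \<Rightarrow> triangle set \<Rightarrow> flip list \<Rightarrow> triangle set list \<Rightarrow> bool" where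
  "valid_seq P T F Ts \<longleftrightarrow> length Ts = Suc (length F) \<and> Ts ! 0 = T \<and>
     (\<forall>i < length F. admissible P (Ts ! i) (F ! i) \<and> Ts ! Suc i = perform (Ts ! i) (F ! i))"

text \<open>Arcs of D_F on 0-based indices: (i,j) is an arc iff the paper's f_(i+1) -> f_(j+1).
  The paper's T_(j-1) (for 1-based j) is Ts ! j for 0-based j.\<close>
definition arcs :: "flip list \<Rightarrow> triangle set list \<Rightarrow> (nat \<times> nat) set" where
  "arcs F Ts = {(i, j). i < j \<and> j < length F \<and>
      (phi (F ! i) = eps (F ! j) \<or> share_triangle (Ts ! j) (phi (F ! i)) (eps (F ! j))) \<and>
      \<not> (\<exists>p. i < p \<and> p < j \<and> eps (F ! p) = phi (F ! i))}"

definition is_component :: "flip list \<Rightarrow> triangle set list \<Rightarrow> nat set \<Rightarrow> bool" where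
  "is_component F Ts C \<longleftrightarrow> (\<exists>i0 < length F.
      C = {j. (i0, j) \<in> (arcs F Ts \<union> (arcs F Ts)\<inverse>)\<^sup>*})"

definition solution :: "pt set \<Rightarrow> triangle set \<Rightarrow> triangle set \<Rightarrow> nat \<Rightarrow> flip list \<Rightarrow> triangle set list \<Rightarrow> bool" where
  "solution P Ti Tf k F Ts \<longleftrightarrow> valid_seq P Ti F Ts \<and> last Ts = Tf \<and> length F = k \<and>
     (\<forall>G Gs. valid_seq P Ti G Gs \<and> last Gs = Tf \<longrightarrow> k \<le> length G)"

definition changed_edges :: "triangle set \<Rightarrow> triangle set \<Rightarrow> edge set" where
  "changed_edges Ti Tf = edges Ti - edges Tf"

definition normalized :: "triangle set \<Rightarrow> triangle set \<Rightarrow> flip list \<Rightarrow> triangle set list \<Rightarrow> bool" where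
  "normalized Ti Tf F Ts \<longleftrightarrow> (\<forall>C. is_component F Ts C \<longrightarrow>
      (\<exists>i\<in>C. eps (F ! i) \<in> changed_edges Ti Tf) \<and> (\<exists>a b. C = {a..<b}))"

end

theory Submission
  imports Defs
begin

text \<open>Call a triangle spawned at time t if it was created by a flip reachable from f_i in D_F
  and has been present in every triangulation since. The diagonal that created a spawned
  triangle has not been flipped since, so a flip whose underlying edge lies in a spawned triangle
  is adjacent to the flip that created it, hence reachable from f_i. It follows that the property
  ``every triangle covering the point z is spawned'' survives all later flips: a new triangle lies
  in the convex quadrilateral of the flip, whose triangles covering z are spawned, so the flip
  itself is reachable and its new triangles are spawned as well.

  Now follow the edge ab = \<epsilon>(f_h). From the time supplied by the hypothesis on, either some
  spawned triangle contains ab, or every triangle covering the midpoint of ab is spawned, and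
  this invariant survives every flip. At time h it produces a spawned triangle containing
  \<epsilon>(f_h), hence a path from f_i to f_h. The geometry enters through two facts: triangles of a
  triangulation meet in a common face, so a triangle covering the midpoint of an edge of another
  one contains that edge; and an edge lies in at most two triangles.\<close>

definition det2 :: "pt \<Rightarrow> pt \<Rightarrow> real" where
  "det2 a b = fst a * snd b - snd a * fst b"

lemma det2_eq_0_imp_parallel:
  assumes "det2 a b = 0" "a \<noteq> 0"
  shows "\<exists>c. b = c *\<^sub>R a"
proof -
  have nonzero: "fst a * fst a + snd a * snd a \<noteq> 0"
    using assms(2) by (simp add: prod_eq_iff)
  define c where "c = (fst a * fst b + snd a * snd b) / (fst a * fst a + snd a * snd a)"
  have "b = c *\<^sub>R a"
    using nonzero assms(1) unfolding c_def det2_def prod_eq_iff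
    by (simp add: field_simps)
  then show ?thesis ..
qed

lemma collinear_0_iff_det2: "collinear {0, a, b} \<longleftrightarrow> det2 a b = 0"
  using det2_eq_0_imp_parallel[of a b] by (auto simp: collinear_lemma det2_def)

lemma collinear_iff_det2: "collinear {x, y, u} \<longleftrightarrow> det2 (y - x) (u - x) = 0"
proof -
  have "collinear {x, y, u} \<longleftrightarrow> collinear {0, y - x, u - x}"
    using collinear_3[of y x u] by (simp add: NO_MATCH_def insert_commute)
  also have "\<dots> \<longleftrightarrow> det2 (y - x) (u - x) = 0"
    by (rule collinear_0_iff_det2)
  finally show ?thesis .
qed

lemma midpoint_in_convex_hull:
  fixes S :: "'a::real_vector set"
  shows "a \<in> S \<Longrightarrow> b \<in> S \<Longrightarrow> midpoint a b \<in> convex hull S"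
  using hull_mono[of "{a, b}" S] midpoint_in_closed_segment[of a b]
  by (auto simp: segment_convex_hull)

lemma midpoint_in_face_of_triangle:
  fixes t S :: "'a::real_vector set"
  assumes "card t = 3" "\<not> collinear t" "a \<in> t" "b \<in> t" "a \<noteq> b" "S \<subseteq> t"
    and "midpoint a b \<in> convex hull S"
  shows "a \<in> S"
proof (rule ccontr)
  assume "a \<notin> S"
  have "card (t - {a, b}) = 1"
    using assms(1,3,4,5) by (simp add: card_Diff_subset)
  then obtain w where w: "t - {a, b} = {w}"
    by (meson card_1_singletonE)
  then have t: "t = {a, b, w}"
    using assms(3,4) by blast
  have "convex hull S \<subseteq> affine hull {b, w}"
    using \<open>a \<notin> S\<close> assms(6) t
    by (metis convex_hull_subset_affine_hull hull_mono insert_subset subset_insert order_trans)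
  then have "midpoint a b \<in> affine hull {b, w}"
    using assms(7) by blast
  then have "2 *\<^sub>R midpoint a b + (-1) *\<^sub>R b \<in> affine hull {b, w}"
    by (intro mem_affine) (auto simp: hull_inc)
  moreover have "2 *\<^sub>R midpoint a b + (-1) *\<^sub>R b = a"
    by (simp add: midpoint_def scaleR_add_right)
  ultimately have "collinear {b, w, a}"
    by (simp add: affine_hull_3_imp_collinear)
  then show False
    using assms(2) t by (simp add: insert_commute)
qed

lemma edge_in_face_of_triangle:
  fixes t S :: "'a::real_vector set"
  assumes "card t = 3" "\<not> collinear t" "a \<in> t" "b \<in> t" "a \<noteq> b" "S \<subseteq> t"
    and "midpoint a b \<in> convex hull S"
  shows "{a, b} \<subseteq> S"
  using midpoint_in_face_of_triangle[OF assms]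
    midpoint_in_face_of_triangle[OF assms(1,2,4,3) _ assms(6)] assms(5,7)
  by (simp add: midpoint_sym)

lemma det2_cramer:
  assumes "det2 a b \<noteq> 0"
  shows "p = (det2 p b / det2 a b) *\<^sub>R a + (det2 a p / det2 a b) *\<^sub>R b"
proof -
  have "det2 a b *\<^sub>R p = det2 p b *\<^sub>R a + det2 a p *\<^sub>R b"
    by (simp add: det2_def prod_eq_iff algebra_simps)
  then have "p = inverse (det2 a b) *\<^sub>R (det2 p b *\<^sub>R a + det2 a p *\<^sub>R b)"
    using assms by (metis scaleR_scaleR left_inverse scaleR_one)
  then show ?thesis
    by (simp add: scaleR_add_right divide_inverse_commute)
qed

lemma triangles_on_same_side_overlap:
  assumes same_side: "det2 (y - x) (u - x) * det2 (y - x) (v - x) > 0"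
  obtains q where "q \<in> convex hull {x, y, u}" "q \<in> convex hull {x, y, v}" "q \<notin> convex hull {x, y}"
proof -
  define Du Dv where "Du = det2 (y - x) (u - x)" and "Dv = det2 (y - x) (v - x)"
  define \<alpha> \<gamma> where "\<alpha> = det2 (u - x) (v - x) / Dv" and "\<gamma> = Du / Dv"
  have "Dv \<noteq> 0" "Du \<noteq> 0" "\<gamma> > 0"
    using same_side by (auto simp: Du_def Dv_def \<gamma>_def zero_less_divide_iff zero_less_mult_iff)
  have u: "u = x + \<alpha> *\<^sub>R (y - x) + \<gamma> *\<^sub>R (v - x)"
    using det2_cramer[of "y - x" "v - x" "u - x"] \<open>Dv \<noteq> 0\<close>
    by (simp add: Du_def Dv_def \<alpha>_def \<gamma>_def algebra_simps)
  define s where "s = 1 / (4 * (\<bar>\<alpha>\<bar> + \<gamma> + 1))"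
  have "s > 0" "\<bar>s * \<alpha>\<bar> \<le> 1/4" "s * \<gamma> \<le> 1/4" "s \<le> 1/4"
    using \<open>\<gamma> > 0\<close> by (auto simp: s_def field_simps abs_mult)
  define q where "q = ((1 - s) / 2) *\<^sub>R x + ((1 - s) / 2) *\<^sub>R y + s *\<^sub>R u"
  \<comment> \<open>the point q is close to the midpoint of xy, shifted towards u\<close>
  have "q \<in> convex hull {x, y, u}"
    unfolding convex_hull_3 q_def using \<open>s > 0\<close> \<open>s \<le> 1/4\<close> by force
  moreover have "q \<in> convex hull {x, y, v}"
  proof -
    have "q = (1/2 - s * (\<alpha> - 1/2) - s * \<gamma>) *\<^sub>R x + (1/2 + s * (\<alpha> - 1/2)) *\<^sub>R y + (s * \<gamma>) *\<^sub>R v"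
      unfolding q_def u by (simp add: prod_eq_iff field_simps)
    moreover have "0 \<le> 1/2 - s * (\<alpha> - 1/2) - s * \<gamma>" "0 \<le> 1/2 + s * (\<alpha> - 1/2)" "0 \<le> s * \<gamma>"
      using \<open>s > 0\<close> \<open>\<bar>s * \<alpha>\<bar> \<le> 1/4\<close> \<open>s * \<gamma> \<le> 1/4\<close> \<open>s \<le> 1/4\<close> \<open>\<gamma> > 0\<close>
      by (auto simp: right_diff_distrib abs_le_iff)
    ultimately show ?thesis
      unfolding convex_hull_3 by force
  qed
  moreover have "q \<notin> convex hull {x, y}"
  proof
    assume "q \<in> convex hull {x, y}"
    then have "collinear {x, y, q}"
      using affine_hull_3_imp_collinear convex_hull_subset_affine_hull by blast
    moreover have "det2 (y - x) (q - x) = s * Du"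
      unfolding q_def Du_def by (simp add: det2_def field_simps)
    ultimately show False
      using \<open>s > 0\<close> \<open>Du \<noteq> 0\<close> by (simp add: collinear_iff_det2)
  qed
  ultimately show thesis ..
qed

lemma triangulation_same_side_apex_eq:
  assumes "triangulation P T" "insert u {x, y} \<in> T" "insert v {x, y} \<in> T" "u \<notin> {x, y}" "v \<notin> {x, y}"
    and "det2 (y - x) (u - x) * det2 (y - x) (v - x) > 0"
  shows "u = v"
proof (rule ccontr)
  assume "u \<noteq> v"
  then have "insert u {x, y} \<inter> insert v {x, y} = {x, y}"
    using assms(4,5) by auto
  then have "convex hull {x, y, u} \<inter> convex hull {x, y, v} = convex hull {x, y}"
    using assms(1-3) unfolding triangulation_def by (metis insert_commute)
  then show False
    using triangles_on_same_side_overlap[OF assms(6)] by blast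
qed

lemma triangulation_edge_in_two_triangles:
  assumes tri: "triangulation P T" and "card e = 2"
    and "insert c e \<in> T" "insert d e \<in> T" "insert w e \<in> T" "c \<notin> e" "d \<notin> e" "w \<notin> e" "c \<noteq> d"
  shows "w = c \<or> w = d"
proof -
  obtain x y where e: "e = {x, y}"
    using \<open>card e = 2\<close> by (meson card_2_iff)
  define side where "side z = det2 (y - x) (z - x)" for z
  have side_nonzero: "side z \<noteq> 0" if "insert z e \<in> T" for z
    using tri that unfolding triangulation_def side_def e
    by (metis collinear_iff_det2 insert_commute)
  have apex_eq: "z = z'" if "insert z e \<in> T" "insert z' e \<in> T" "z \<notin> e" "z' \<notin> e" "side z * side z' > 0" for z z'
    using triangulation_same_side_apex_eq[OF tri] that unfolding side_def e by blast
  have "side c * side d < 0"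
    using apex_eq[of c d] side_nonzero[of c] side_nonzero[of d] assms(3,4,6,7,9)
    by (metis linorder_neqE_linordered_idom mult_eq_0_iff)
  then have "side w * side c > 0 \<or> side w * side d > 0"
    using side_nonzero[OF assms(5)] by (auto simp: mult_less_0_iff zero_less_mult_iff)
  then show ?thesis
    using apex_eq assms(3-8) by metis
qed

lemma triangulation_midpoint_edge:
  assumes tri: "triangulation P T" and "\<tau> \<in> T" "\<tau>' \<in> T" "{a, b} \<subseteq> \<tau>" "a \<noteq> b"
    and "midpoint a b \<in> convex hull \<tau>'"
  shows "{a, b} \<subseteq> \<tau>'"
proof -
  have "midpoint a b \<in> convex hull \<tau>"
    using assms(4) by (simp add: midpoint_in_convex_hull)
  then have "midpoint a b \<in> convex hull (\<tau> \<inter> \<tau>')"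
    using tri assms(2,3,6) unfolding triangulation_def by blast
  then show ?thesis
    using edge_in_face_of_triangle[of \<tau> a b "\<tau> \<inter> \<tau>'"] tri assms(2,4,5)
    unfolding triangulation_def by blast
qed

lemma mem_perform_iff:
  "\<tau> \<in> perform T f \<longleftrightarrow> (\<tau> \<in> T \<and> \<not> eps f \<subseteq> \<tau>) \<or> (\<exists>x\<in>eps f. \<tau> = insert x (phi f))"
  unfolding perform_def by blast

lemma admissibleE:
  assumes "admissible P T f"
  obtains c d where "triangulation P T" "card (eps f) = 2" "c \<noteq> d" "c \<notin> eps f" "d \<notin> eps f"
    "phi f = {c, d}" "insert c (eps f) \<in> T" "insert d (eps f) \<in> T"
    "convex_quad (insert c (eps f)) (insert d (eps f))"
  using assms unfolding admissible_def edges_def by blast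

lemma admissible_card_edges:
  assumes "admissible P T f"
  shows "card (eps f) = 2" "card (phi f) = 2"
  using admissibleE[OF assms] by (metis card_2_iff)+

lemma admissible_card_diagonals:
  assumes "admissible P T f"
  shows "card (eps f \<union> phi f) = 4"
proof -
  obtain c d where "card (eps f) = 2" "c \<noteq> d" "c \<notin> eps f" "d \<notin> eps f" "phi f = {c, d}"
    using assms by (rule admissibleE)
  moreover have "finite (eps f)"
    using \<open>card (eps f) = 2\<close> by (intro card_ge_0_finite) simp
  ultimately show ?thesis by simp
qed

lemma admissible_triangle_containing_eps:
  assumes "admissible P T f" "\<tau> \<in> T" "eps f \<subseteq> \<tau>"
  obtains c where "c \<in> phi f" "\<tau> = insert c (eps f)"
proof -
  obtain c d where cd: "triangulation P T" "card (eps f) = 2" "c \<noteq> d" "c \<notin> eps f" "d \<notin> eps f"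
    "phi f = {c, d}" "insert c (eps f) \<in> T" "insert d (eps f) \<in> T"
    using assms(1) by (rule admissibleE)
  have "finite (eps f)"
    using cd(2) by (intro card_ge_0_finite) simp
  moreover have "card \<tau> = 3"
    using cd(1) assms(2) unfolding triangulation_def by blast
  ultimately have "card (\<tau> - eps f) = 1"
    using assms(3) cd(2) by (simp add: card_Diff_subset)
  then obtain w where "\<tau> - eps f = {w}"
    by (meson card_1_singletonE)
  then have w: "\<tau> = insert w (eps f)" "w \<notin> eps f"
    using assms(3) by blast+
  then have "w = c \<or> w = d"
    using triangulation_edge_in_two_triangles[OF cd(1,2,7,8)] cd(4,5,3) assms(2) by blast
  then show thesis
    using that w(1) cd(6) by blast
qed

lemma admissible_new_triangle_covered:
  assumes "admissible P T f" "x \<in> eps f" "z \<in> convex hull (insert x (phi f))"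
  shows "\<exists>\<tau>\<in>T. eps f \<subseteq> \<tau> \<and> z \<in> convex hull \<tau>"
proof -
  obtain c d where cd: "phi f = {c, d}" "insert c (eps f) \<in> T" "insert d (eps f) \<in> T"
    "convex_quad (insert c (eps f)) (insert d (eps f))"
    using assms(1) by (rule admissibleE)
  let ?Q = "convex hull (insert c (eps f)) \<union> convex hull (insert d (eps f))"
  have "insert x (phi f) \<subseteq> ?Q"
    using assms(2) cd(1) by (auto intro: hull_inc)
  moreover have "convex ?Q"
    using cd(4) unfolding convex_quad_def by blast
  ultimately have "convex hull (insert x (phi f)) \<subseteq> ?Q"
    by (rule hull_minimal)
  then show ?thesis
    using assms(3) cd(2,3) by blast
qed

lemma admissible_edge_kept_in_new_triangle:
  assumes "admissible P T f" "\<tau> \<in> T" "eps f \<subseteq> \<tau>" "g \<subseteq> \<tau>" "card g = 2" "g \<noteq> eps f"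
  shows "\<exists>x\<in>eps f. g \<subseteq> insert x (phi f)"
proof -
  obtain c where c: "c \<in> phi f" "\<tau> = insert c (eps f)"
    using assms(1-3) by (rule admissible_triangle_containing_eps)
  have "card (eps f) = 2"
    using assms(1) by (rule admissible_card_edges)
  then have "\<not> g \<subseteq> eps f"
    using assms(5,6) by (metis card_subset_eq card.infinite zero_neq_numeral)
  then have "c \<in> g" "card (g - {c}) = 1"
    using assms(4,5) c(2) by (auto simp: card_Diff_singleton_if)
  then obtain x where x: "g - {c} = {x}"
    by (meson card_1_singletonE)
  then have "x \<in> eps f"
    using assms(4) c(2) by blast
  moreover have "g \<subseteq> insert x (phi f)"
    using x \<open>c \<in> g\<close> c(1) by blast
  ultimately show ?thesis ..
qed

locale flip_sequence =
  fixes P :: "pt set" and T0 :: "triangle set" and F :: "flip list" and Ts :: "triangle set list"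
  assumes valid: "valid_seq P T0 F Ts"
    and triangulation_last: "triangulation P (last Ts)"
begin

lemma admissible_nth: "t < length F \<Longrightarrow> admissible P (Ts ! t) (F ! t)"
  using valid unfolding valid_seq_def by blast

lemma mem_nth_Suc_iff:
  assumes "t < length F"
  shows "\<tau> \<in> Ts ! Suc t \<longleftrightarrow>
           (\<tau> \<in> Ts ! t \<and> \<not> eps (F ! t) \<subseteq> \<tau>) \<or> (\<exists>x\<in>eps (F ! t). \<tau> = insert x (phi (F ! t)))"
  using valid assms unfolding valid_seq_def by (simp add: mem_perform_iff)

lemma triangulation_nth:
  assumes "t \<le> length F"
  shows "triangulation P (Ts ! t)"
proof (cases "t < length F")
  case True
  then show ?thesis
    using admissible_nth unfolding admissible_def by blast
next
  case False
  moreover have "length Ts = Suc (length F)"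
    using valid unfolding valid_seq_def by blast
  ultimately have "Ts ! t = last Ts"
    using assms by (simp add: last_conv_nth flip: length_greater_0_conv)
  then show ?thesis
    using triangulation_last by simp
qed

definition spawned :: "nat \<Rightarrow> nat \<Rightarrow> triangle \<Rightarrow> bool" where
  "spawned i t \<tau> \<longleftrightarrow> (\<exists>r. (i, r) \<in> (arcs F Ts)\<^sup>* \<and> r < t \<and> phi (F ! r) \<subseteq> \<tau> \<and>
                        (\<forall>u. r < u \<and> u \<le> t \<longrightarrow> \<tau> \<in> Ts ! u))"

lemma spawned_Suc: "spawned i t \<tau> \<Longrightarrow> \<tau> \<in> Ts ! Suc t \<Longrightarrow> spawned i (Suc t) \<tau>"
  unfolding spawned_def by (auto simp: le_Suc_eq)

lemma spawned_by_flip: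
  "(i, t) \<in> (arcs F Ts)\<^sup>* \<Longrightarrow> \<tau> \<in> Ts ! Suc t \<Longrightarrow> phi (F ! t) \<subseteq> \<tau> \<Longrightarrow> spawned i (Suc t) \<tau>"
  unfolding spawned_def by (rule exI[of _ t]) (auto simp: le_Suc_eq)

lemma reachable_if_spawned_contains_eps:
  assumes t: "t < length F" and "spawned i t \<tau>" and "eps (F ! t) \<subseteq> \<tau>"
  shows "(i, t) \<in> (arcs F Ts)\<^sup>*"
proof -
  obtain r where r: "(i, r) \<in> (arcs F Ts)\<^sup>*" "r < t" "phi (F ! r) \<subseteq> \<tau>"
    and alive: "\<And>u. r < u \<Longrightarrow> u \<le> t \<Longrightarrow> \<tau> \<in> Ts ! u"
    using assms(2) unfolding spawned_def by blast
  have "card \<tau> = 3"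
    using triangulation_nth[of t] alive[of t] t r(2) unfolding triangulation_def by auto
  have not_flipped: "eps (F ! p) \<noteq> phi (F ! r)" if p: "r < p" "p < t" for p
  proof
    assume flipped: "eps (F ! p) = phi (F ! r)"
    \<comment> \<open>\<tau> survives flip p although it contains the flipped edge, so \<tau> is one of the new triangles\<close>
    have "\<tau> \<in> Ts ! Suc p"
      using alive[of "Suc p"] p by simp
    then obtain x where "x \<in> eps (F ! p)" "\<tau> = insert x (phi (F ! p))"
      using flipped r(3) mem_nth_Suc_iff[of p] p t by auto
    then have "eps (F ! p) \<union> phi (F ! p) \<subseteq> \<tau>"
      using flipped r(3) by blast
    then have "4 \<le> card \<tau>"
      using admissible_card_diagonals[OF admissible_nth[of p]] p t \<open>card \<tau> = 3\<close>
      by (metis card.infinite card_mono less_trans zero_neq_numeral)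
    then show False
      using \<open>card \<tau> = 3\<close> by simp
  qed
  have "card (phi (F ! r)) = 2" "card (eps (F ! t)) = 2"
    using admissible_card_edges admissible_nth r(2) t by (meson less_trans)+
  then have "phi (F ! r) = eps (F ! t) \<or> share_triangle (Ts ! t) (phi (F ! r)) (eps (F ! t))"
    unfolding share_triangle_def using alive[of t] r assms(3) by blast
  then have "(r, t) \<in> arcs F Ts"
    unfolding arcs_def using r(2) t not_flipped by auto
  then show ?thesis
    using r(1) by simp
qed

definition spawned_cover :: "nat \<Rightarrow> nat \<Rightarrow> pt \<Rightarrow> bool" where
  "spawned_cover i t z \<longleftrightarrow> (\<forall>\<tau>\<in>Ts ! t. z \<in> convex hull \<tau> \<longrightarrow> spawned i t \<tau>)"

lemma spawned_cover_Suc: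
  assumes t: "t < length F" and cover: "spawned_cover i t z"
  shows "spawned_cover i (Suc t) z"
  unfolding spawned_cover_def
proof (intro ballI impI)
  fix \<tau> assume \<tau>: "\<tau> \<in> Ts ! Suc t" and z: "z \<in> convex hull \<tau>"
  then consider (old) "\<tau> \<in> Ts ! t" "\<not> eps (F ! t) \<subseteq> \<tau>"
    | (new) x where "x \<in> eps (F ! t)" "\<tau> = insert x (phi (F ! t))"
    using mem_nth_Suc_iff[OF t] by auto
  then show "spawned i (Suc t) \<tau>"
  proof cases
    case old
    then show ?thesis
      using cover z \<tau> spawned_Suc unfolding spawned_cover_def by blast
  next
    case new
    then obtain \<tau>0 where "\<tau>0 \<in> Ts ! t" "eps (F ! t) \<subseteq> \<tau>0" "z \<in> convex hull \<tau>0"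
      using admissible_new_triangle_covered[OF admissible_nth[OF t]] z by blast
    then have "(i, t) \<in> (arcs F Ts)\<^sup>*"
      using cover reachable_if_spawned_contains_eps[OF t] unfolding spawned_cover_def by blast
    then show ?thesis
      using spawned_by_flip \<tau> new(2) by blast
  qed
qed

lemma spawned_cover_mono:
  "t0 \<le> t1 \<Longrightarrow> t1 \<le> length F \<Longrightarrow> spawned_cover i t0 z \<Longrightarrow> spawned_cover i t1 z"
  by (induction t1 rule: dec_induct) (auto intro: spawned_cover_Suc)

lemma spawned_cover_new_diagonal:
  assumes t: "t < length F" and reach: "(i, t) \<in> (arcs F Ts)\<^sup>*" and phi: "phi (F ! t) = {c, d}"
  shows "spawned_cover i (Suc t) (midpoint c d)"
  unfolding spawned_cover_def
proof (intro ballI impI)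
  fix \<tau> assume \<tau>: "\<tau> \<in> Ts ! Suc t" and mid: "midpoint c d \<in> convex hull \<tau>"
  obtain x where "x \<in> eps (F ! t)"
    using admissible_card_edges(1)[OF admissible_nth[OF t]] by (metis card_2_iff insertI1)
  then have "insert x (phi (F ! t)) \<in> Ts ! Suc t"
    using mem_nth_Suc_iff[OF t] by blast
  moreover have "c \<noteq> d"
    using admissible_card_edges(2)[OF admissible_nth[OF t]] phi by auto
  ultimately have "{c, d} \<subseteq> \<tau>"
    using triangulation_midpoint_edge[OF triangulation_nth[of "Suc t"] _ \<tau> _ _ mid] t phi by auto
  then show "spawned i (Suc t) \<tau>"
    using spawned_by_flip[OF reach \<tau>] phi by simp
qed

lemma spawned_cover_flipped_edge:
  assumes t: "t < length F" and reach: "(i, t) \<in> (arcs F Ts)\<^sup>*" and eps: "eps (F ! t) = {a, b}"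
  shows "spawned_cover i (Suc t) (midpoint a b)"
  unfolding spawned_cover_def
proof (intro ballI impI)
  fix \<tau> assume \<tau>: "\<tau> \<in> Ts ! Suc t" and mid: "midpoint a b \<in> convex hull \<tau>"
  then consider (old) "\<tau> \<in> Ts ! t" "\<not> eps (F ! t) \<subseteq> \<tau>" | (new) x where "\<tau> = insert x (phi (F ! t))"
    using mem_nth_Suc_iff[OF t] by auto
  then show "spawned i (Suc t) \<tau>"
  proof cases
    case old
    \<comment> \<open>impossible: an old triangle covering the midpoint of the flipped edge would contain it\<close>
    obtain c where "insert c (eps (F ! t)) \<in> Ts ! t"
      using admissibleE[OF admissible_nth[OF t]] by metis
    moreover have "a \<noteq> b"
      using admissible_card_edges(1)[OF admissible_nth[OF t]] eps by auto
    ultimately have "eps (F ! t) \<subseteq> \<tau>"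
      using triangulation_midpoint_edge[OF triangulation_nth[of t] _ old(1) _ _ mid] t eps by auto
    then show ?thesis
      using old(2) by blast
  next
    case new
    then show ?thesis
      using spawned_by_flip[OF reach \<tau>] by blast
  qed
qed

definition edge_tracked :: "nat \<Rightarrow> nat \<Rightarrow> pt \<Rightarrow> pt \<Rightarrow> bool" where
  "edge_tracked i t a b \<longleftrightarrow>
     (\<exists>\<tau>\<in>Ts ! t. spawned i t \<tau> \<and> {a, b} \<subseteq> \<tau>) \<or> spawned_cover i t (midpoint a b)"

lemma edge_tracked_Suc_of_spawned:
  assumes t: "t < length F" and "a \<noteq> b"
    and \<tau>: "\<tau> \<in> Ts ! t" "spawned i t \<tau>" "{a, b} \<subseteq> \<tau>"
  shows "edge_tracked i (Suc t) a b"
proof (cases "eps (F ! t) \<subseteq> \<tau>")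
  case False
  then have "\<tau> \<in> Ts ! Suc t"
    using \<tau>(1) mem_nth_Suc_iff[OF t] by blast
  then show ?thesis
    unfolding edge_tracked_def using \<tau> spawned_Suc by blast
next
  case True
  then have reach: "(i, t) \<in> (arcs F Ts)\<^sup>*"
    using reachable_if_spawned_contains_eps[OF t \<tau>(2)] by blast
  show ?thesis
  proof (cases "eps (F ! t) = {a, b}")
    case True
    then show ?thesis
      unfolding edge_tracked_def using spawned_cover_flipped_edge[OF t reach] by blast
  next
    case False
    then obtain x where "x \<in> eps (F ! t)" "{a, b} \<subseteq> insert x (phi (F ! t))"
      using admissible_edge_kept_in_new_triangle[OF admissible_nth[OF t] \<tau>(1) True \<tau>(3)] \<open>a \<noteq> b\<close>
      by auto
    moreover from this have "insert x (phi (F ! t)) \<in> Ts ! Suc t"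
      using mem_nth_Suc_iff[OF t] by blast
    ultimately show ?thesis
      unfolding edge_tracked_def using spawned_by_flip[OF reach] by blast
  qed
qed

lemma edge_tracked_Suc:
  assumes "t < length F" "a \<noteq> b" "edge_tracked i t a b"
  shows "edge_tracked i (Suc t) a b"
  using assms edge_tracked_Suc_of_spawned spawned_cover_Suc
  unfolding edge_tracked_def by blast

lemma edge_tracked_mono:
  "t0 \<le> t1 \<Longrightarrow> t1 \<le> length F \<Longrightarrow> a \<noteq> b \<Longrightarrow> edge_tracked i t0 a b \<Longrightarrow> edge_tracked i t1 a b"
  by (induction t1 rule: dec_induct) (auto intro: edge_tracked_Suc)

lemma edge_tracked_start:
  assumes h: "h < length F" "i < h" and "eps (F ! h) = {a, b}" "a \<noteq> b"
    and adj: "phi (F ! i) = eps (F ! h) \<or>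
              (\<exists>j. i < j \<and> j \<le> h \<and> share_triangle (Ts ! j) (phi (F ! i)) (eps (F ! h)))"
  shows "edge_tracked i h a b"
proof -
  have i: "i < length F"
    using h by simp
  obtain c d where cd: "phi (F ! i) = {c, d}"
    using admissibleE[OF admissible_nth[OF i]] by metis
  obtain x where x: "x \<in> eps (F ! i)"
    using admissible_card_edges(1)[OF admissible_nth[OF i]] by (metis card_2_iff insertI1)
  have new: "insert x (phi (F ! i)) \<in> Ts ! Suc i"
    using mem_nth_Suc_iff[OF i] x by blast
  have "\<exists>t0\<le>h. edge_tracked i t0 a b"
    using adj
  proof
    assume "phi (F ! i) = eps (F ! h)"
    then have "edge_tracked i (Suc i) a b"
      unfolding edge_tracked_def using spawned_by_flip[of i i, OF _ new] new assms(3) by auto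
    then show ?thesis
      using h(2) Suc_leI by blast
  next
    assume "\<exists>j. i < j \<and> j \<le> h \<and> share_triangle (Ts ! j) (phi (F ! i)) (eps (F ! h))"
    then obtain j \<tau> where j: "i < j" "j \<le> h" "\<tau> \<in> Ts ! j" "{c, d} \<subseteq> \<tau>" "{a, b} \<subseteq> \<tau>"
      unfolding share_triangle_def using cd assms(3) by metis
    have "spawned_cover i (Suc i) (midpoint c d)"
      using spawned_cover_new_diagonal[OF i _ cd] by simp
    then have "spawned_cover i j (midpoint c d)"
      using spawned_cover_mono[of "Suc i" j] j(1,2) h(1) by simp
    then have "spawned i j \<tau>"
      using j(3,4) midpoint_in_convex_hull unfolding spawned_cover_def by (metis insert_subset)
    then show ?thesis
      unfolding edge_tracked_def using j by blast
  qed
  then show ?thesis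
    using edge_tracked_mono h(1) \<open>a \<noteq> b\<close> by (meson less_imp_le)
qed

lemma reachable_if_edge_tracked:
  assumes h: "h < length F" and "eps (F ! h) = {a, b}" and tracked: "edge_tracked i h a b"
  shows "(i, h) \<in> (arcs F Ts)\<^sup>*"
proof -
  obtain \<tau> where "\<tau> \<in> Ts ! h" "{a, b} \<subseteq> \<tau>" "spawned i h \<tau>"
  proof -
    obtain c where \<tau>: "insert c (eps (F ! h)) \<in> Ts ! h"
      using admissibleE[OF admissible_nth[OF h]] by metis
    show thesis
      using tracked that \<tau> midpoint_in_convex_hull[of a "insert c {a, b}" b] assms(2)
      unfolding edge_tracked_def spawned_cover_def by auto
  qed
  then show ?thesis
    using reachable_if_spawned_contains_eps[OF h] assms(2) by simp
qed

theorem reachable_if_adjacent_later: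
  assumes "i < h" "h < length F"
    and "phi (F ! i) = eps (F ! h) \<or>
         (\<exists>j. i < j \<and> j \<le> h \<and> share_triangle (Ts ! j) (phi (F ! i)) (eps (F ! h)))"
  shows "(i, h) \<in> (arcs F Ts)\<^sup>+"
proof -
  obtain a b where ab: "eps (F ! h) = {a, b}" "a \<noteq> b"
    using admissible_card_edges(1)[OF admissible_nth[OF assms(2)]] by (meson card_2_iff)
  then have "(i, h) \<in> (arcs F Ts)\<^sup>*"
    using reachable_if_edge_tracked edge_tracked_start assms by blast
  then show ?thesis
    using assms(1) by (metis less_irrefl rtranclD)
qed

end

lemma trancl_restrict_closed:
  assumes "(a, b) \<in> r\<^sup>+" "a \<in> C" "\<And>x y. x \<in> C \<Longrightarrow> (x, y) \<in> r \<Longrightarrow> y \<in> C"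
  shows "(a, b) \<in> (r \<inter> C \<times> C)\<^sup>+"
  using assms(1)
proof (induction rule: trancl_induct)
  case (base y)
  then show ?case
    using assms(2,3) by blast
next
  case (step y z)
  then have "y \<in> C"
    using trancl_subset_Sigma[of "r \<inter> C \<times> C" C] by blast
  then show ?case
    using step assms(3) by (blast intro: trancl_into_trancl)
qed

lemma component_closed:
  "is_component F Ts C \<Longrightarrow> x \<in> C \<Longrightarrow> (x, y) \<in> arcs F Ts \<Longrightarrow> y \<in> C"
  unfolding is_component_def by (auto intro: rtrancl_into_rtrancl)

lemma component_less_length:
  assumes "is_component F Ts C" "h \<in> C"
  shows "h < length F"
proof -
  obtain i0 where "(i0, h) \<in> (arcs F Ts \<union> (arcs F Ts)\<inverse>)\<^sup>*" "i0 < length F"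
    using assms unfolding is_component_def by blast
  then show ?thesis
    by (induction rule: rtrancl_induct) (auto simp: arcs_def)
qed

theorem lemma6:
  fixes P :: "pt set" and Ti Tf :: "triangle set" and k :: nat
    and F :: "flip list" and Ts :: "triangle set list" and C :: "nat set" and i h :: nat
  assumes "triangulation P Ti" and "triangulation P Tf"
    and "solution P Ti Tf k F Ts"
    and "normalized Ti Tf F Ts"
    and "is_component F Ts C"
    and "i \<in> C" and "h \<in> C" and "i < h"
    and "phi (F ! i) = eps (F ! h) \<or>
         (\<exists>j. i < j \<and> j \<le> h \<and> share_triangle (Ts ! j) (phi (F ! i)) (eps (F ! h)))"
  shows "(i, h) \<in> (arcs F Ts \<inter> C \<times> C)\<^sup>+"
proof -
  interpret flip_sequence P Ti F Ts
    using assms(2,3) unfolding solution_def by unfold_locales auto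
  have "(i, h) \<in> (arcs F Ts)\<^sup>+"
    using reachable_if_adjacent_later assms(5,7-9) component_less_length by blast
  then show ?thesis
    using trancl_restrict_closed assms(5,6) component_closed by metis
qed

end
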